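(* Let $\alpha\neq 0$, $\beta,\gamma$ be real numbers and $\lambda$ a nonnegative integer. For all nonnegative integers $n$, $$\mathcal{E}_{n}^{(\lambda)}(\alpha,\beta,\gamma)=(-1)^{n}A_{n}^{\lambda,-1/2}(\alpha,-\beta,-\gamma)=A_{n}^{\lambda,-1/2}(-\alpha,\beta,\gamma).$$
   Context: For a number $t$ and $\alpha$, the generalised factorial is $(t|\alpha)_n=\prod_{j=0}^{n-1}(t-j\alpha)$ for $n\ge 1$ and $(t|\alpha)_0=1$. For parameters $\alpha,\beta,\gamma$, the generalised Stirling numbers $S(n,k,\alpha,\beta,\gamma)$ ($0\le k\le n$) are defined by the polynomial identity $(t|\alpha)_n=\sum_{k=0}^{n}S(n,k,\alpha,\beta,\gamma)\,(t-\gamma|\beta)_k$ in the variable $t$. For a nonnegative integer $\lambda$ put $\binom{k+\lambda-1}{k}=\lambda(\lambda+1)\cdots(\lambda+k-1)/k!$ (equal to $1$ for $k=0$). Define $$A^{\lambda,x}_n(\alpha,\beta,\gamma)=\sum_{k=0}^{n}\binom{k+\lambda-1}{k}(-1)^{n+k}\beta^k k!\,S(n,k,\alpha,-\beta,-\gamma)\,x^k .$$ The higher order generalised Euler polynomials $\mathcal{E}_n^{(\lambda)}(\alpha,\beta,x)$ are defined by the formal power series identity $$\left[\frac{2}{(1+\alpha t)^{\beta/\alpha}+1}\right]^{\lambda}(1+\alpha t)^{x/\alpha}=\sum_{n=0}^{\infty}\mathcal{E}_{n}^{(\lambda)}(\alpha,\beta,x)\frac{t^{n}}{n!},$$ where $(1+\alpha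 t)^{c}=\sum_{j\ge0}\binom{c}{j}\alpha^jt^j$. *)

theory Defs
  imports "HOL-Computational_Algebra.Formal_Power_Series"
begin

definition gfact :: "real \<Rightarrow> real \<Rightarrow> nat \<Rightarrow> real" where
  "gfact t a n = (\<Prod>j<n. t - real j * a)"

text \<open>Generalised Stirling numbers S(n,k,a,b,c), defined by the polynomial identity
  (t|a)_n = sum_{k=0}^n S(n,k,a,b,c) (t-c|b)_k for all t; values for k > n are set to 0
  to make the description unique.\<close>
definition gstirling :: "nat \<Rightarrow> nat \<Rightarrow> real \<Rightarrow> real \<Rightarrow> real \<Rightarrow> real" where
  "gstirling n k a b c =
     (THE s :: nat \<Rightarrow> real. (\<forall>t. gfact t a n = (\<Sum>i\<le>n. s i * gfact (t - c) b i))
                          \<and> (\<forall>i>n. s i = 0)) k"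

definition Apoly :: "nat \<Rightarrow> nat \<Rightarrow> real \<Rightarrow> real \<Rightarrow> real \<Rightarrow> real \<Rightarrow> real" where
  "Apoly n lam x a b c =
     (\<Sum>k\<le>n. (pochhammer (real lam) k / fact k) * (-1) ^ (n + k) * b ^ k * fact k
              * gstirling n k a (- b) (- c) * x ^ k)"

definition binom_fps :: "real \<Rightarrow> real \<Rightarrow> real fps" where
  "binom_fps a e = Abs_fps (\<lambda>j. (e gchoose j) * a ^ j)"

definition geuler :: "nat \<Rightarrow> nat \<Rightarrow> real \<Rightarrow> real \<Rightarrow> real \<Rightarrow> real" where
  "geuler n lam a b x =
     fact n * fps_nth ((fps_const 2 * inverse (binom_fps a (b / a) + 1)) ^ lam
                        * binom_fps a (x / a)) n"

end

theory Submission
  imports Defs "HOL-Computational_Algebra.Polynomial"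
begin

(* Put B = (1 + \<alpha> t)^(\<beta>/\<alpha>) and G = (1 + \<alpha> t)^(\<gamma>/\<alpha>). The exponential generating
   function of the generalised Stirling numbers is given by
   k! \<beta>^k \<Sum>_n S(n,k,\<alpha>,\<beta>,\<gamma>) t^n/n! = (B - 1)^k G:
   both sides satisfy the same triangular recurrence in n, the right-hand side because
   (1 + \<alpha> t) d/dt (1 + \<alpha> t)^(e/\<alpha>) = e (1 + \<alpha> t)^(e/\<alpha>).
   Since 2/(B + 1) = 1/(1 + V) with V = (B - 1)/2, expanding (1 + V)^(-\<lambda>) binomially shows
   that the n-th Euler coefficient is \<Sum>_k (\<lambda>)_k (-\<beta>/2)^k S(n,k,\<alpha>,\<beta>,\<gamma>), and both
   A-expressions reduce to this sum via S(n,k,-\<alpha>,-\<beta>,-\<gamma>) = (-1)^(n+k) S(n,k,\<alpha>,\<beta>,\<gamma>). *)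

unbundle fps_syntax

fun gstir :: "nat \<Rightarrow> nat \<Rightarrow> real \<Rightarrow> real \<Rightarrow> real \<Rightarrow> real" where
  "gstir 0 k a b c = (if k = 0 then 1 else 0)"
| "gstir (Suc n) k a b c = (if k = 0 then 0 else gstir n (k - 1) a b c)
      + (c + real k * b - real n * a) * gstir n k a b c"

lemma gstir_eq_0: "n < k \<Longrightarrow> gstir n k a b c = 0"
  by (induction n arbitrary: k) auto

lemma gfact_Suc: "gfact t a (Suc n) = gfact t a n * (t - real n * a)"
  by (simp add: gfact_def)

lemma gfact_expansion_gstir:
  "gfact t a n = (\<Sum>k\<le>n. gstir n k a b c * gfact (t - c) b k)"
proof (induction n)
  case 0
  then show ?case by (simp add: gfact_def)
next
  case (Suc n)
  define G where "G k = gfact (t - c) b k" for k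
  have G_Suc: "G k * (t - real n * a) = G (Suc k) + (c + real k * b - real n * a) * G k" for k
    by (simp add: G_def gfact_Suc algebra_simps)
  have "gfact t a (Suc n) = (\<Sum>k\<le>n. gstir n k a b c * (G k * (t - real n * a)))"
    using Suc by (simp add: gfact_Suc G_def sum_distrib_right mult.assoc)
  also have "\<dots> = (\<Sum>k\<le>n. gstir n k a b c * G (Suc k)
      + (c + real k * b - real n * a) * gstir n k a b c * G k)"
    unfolding G_Suc by (simp add: algebra_simps)
  also have "\<dots> = (\<Sum>k\<le>n. gstir n k a b c * G (Suc k))
      + (\<Sum>k\<le>n. (c + real k * b - real n * a) * gstir n k a b c * G k)"
    by (rule sum.distrib)
  also have "(\<Sum>k\<le>n. gstir n k a b c * G (Suc k))
      = (\<Sum>k\<le>Suc n. (if k = 0 then 0 else gstir n (k - 1) a b c) * G k)"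
    by (subst sum.atMost_Suc_shift) simp
  also have "(\<Sum>k\<le>n. (c + real k * b - real n * a) * gstir n k a b c * G k)
      = (\<Sum>k\<le>Suc n. (c + real k * b - real n * a) * gstir n k a b c * G k)"
    by (simp add: gstir_eq_0)
  finally show ?case
    by (simp add: G_def[symmetric] sum.distrib[symmetric] algebra_simps)
qed

definition gfact_poly :: "real \<Rightarrow> real \<Rightarrow> nat \<Rightarrow> real poly" where
  "gfact_poly c b k = (\<Prod>j<k. [:-(c + real j * b), 1:])"

lemma poly_gfact_poly: "poly (gfact_poly c b k) t = gfact (t - c) b k"
  by (simp add: gfact_poly_def gfact_def poly_prod algebra_simps)

lemma degree_gfact_poly: "degree (gfact_poly c b k) = k"
  and lead_coeff_gfact_poly: "coeff (gfact_poly c b k) k = 1"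
proof -
  have "degree (gfact_poly c b k) = k \<and> coeff (gfact_poly c b k) k = 1"
  proof (induction k)
    case (Suc k)
    have step: "gfact_poly c b (Suc k) = gfact_poly c b k * [:-(c + real k * b), 1:]"
      by (simp add: gfact_poly_def)
    have "gfact_poly c b k \<noteq> 0" using Suc by auto
    with Suc have "degree (gfact_poly c b (Suc k)) = Suc k"
      unfolding step by (subst degree_mult_eq) auto
    moreover have "coeff (gfact_poly c b (Suc k)) (Suc k) = 1"
      using coeff_mult_degree_sum[of "gfact_poly c b k" "[:-(c + real k * b), 1:]"] Suc
      unfolding step by simp
    ultimately show ?case ..
  qed (simp add: gfact_poly_def)
  then show "degree (gfact_poly c b k) = k" "coeff (gfact_poly c b k) k = 1" by auto
qed

lemma gfact_linear_independent:
  assumes "\<And>t. (\<Sum>i\<le>N. r i * gfact (t - c) b i) = 0" and "i \<le> N"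
  shows "r i = 0"
  using assms
proof (induction N arbitrary: i)
  case 0
  then show ?case by (simp add: gfact_def)
next
  case (Suc N)
  define R where "R = (\<Sum>i\<le>Suc N. smult (r i) (gfact_poly c b i))"
  have "poly R t = 0" for t
    using Suc.prems(1) by (simp add: R_def poly_sum poly_gfact_poly)
  then have "R = 0" using poly_all_0_iff_0 by blast
  have "coeff (gfact_poly c b i) (Suc N) = 0" if "i \<le> N" for i
    using that by (intro coeff_eq_0) (simp add: degree_gfact_poly)
  then have "coeff R (Suc N) = r (Suc N)"
    by (simp add: R_def coeff_sum lead_coeff_gfact_poly)
  with \<open>R = 0\<close> have r_top: "r (Suc N) = 0" by simp
  with Suc.prems(1) have "\<And>t. (\<Sum>i\<le>N. r i * gfact (t - c) b i) = 0" by simp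
  with Suc.IH r_top Suc.prems(2) show ?case by (cases "i = Suc N") auto
qed

lemma gstirling_eq_gstir: "gstirling = gstir"
proof (intro ext)
  fix n k a b c
  let ?P = "\<lambda>s :: nat \<Rightarrow> real. (\<forall>t. gfact t a n = (\<Sum>i\<le>n. s i * gfact (t - c) b i))
                          \<and> (\<forall>i>n. s i = 0)"
  have gstir: "?P (\<lambda>k. gstir n k a b c)"
    using gfact_expansion_gstir gstir_eq_0 by blast
  have "s = (\<lambda>k. gstir n k a b c)" if "?P s" for s
  proof
    fix i
    have "(\<Sum>j\<le>n. (s j - gstir n j a b c) * gfact (t - c) b j) = 0" for t
      using that gstir by (simp add: algebra_simps sum_subtractf)
    from gfact_linear_independent[OF this] have "i \<le> n \<Longrightarrow> s i = gstir n i a b c"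
      by simp
    then show "s i = gstir n i a b c"
      using that gstir_eq_0[of n i] by (cases "i \<le> n") auto
  qed
  with gstir have "(THE s. ?P s) = (\<lambda>k. gstir n k a b c)"
    by (intro the_equality) auto
  then show "gstirling n k a b c = gstir n k a b c" by (simp add: gstirling_def)
qed

lemma gstir_uminus: "gstir n k (-a) (-b) (-c) = (-1) ^ (n + k) * gstir n k a b c"
proof (induction n arbitrary: k)
  case (Suc n)
  then show ?case by (cases k) (simp_all add: algebra_simps)
qed simp

lemma fps_linear_mult_deriv_nth:
  fixes F :: "'a::comm_ring_1 fps"
  shows "((1 + fps_const a * fps_X) * fps_deriv F) $ n
       = of_nat (Suc n) * F $ Suc n + a * of_nat n * F $ n"
  by (cases n) (simp_all add: distrib_right mult.assoc algebra_simps)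

lemma binom_fps_ODE:
  "(1 + fps_const a * fps_X) * fps_deriv (binom_fps a e) = fps_const (a * e) * binom_fps a e"
proof (rule fps_ext)
  fix n
  have "of_nat (Suc n) * (e gchoose Suc n) = (e - of_nat n) * (e gchoose n)"
    by (simp only: gbinomial_absorption gbinomial_absorb_comp)
  then have "a ^ Suc n * (of_nat (Suc n) * (e gchoose Suc n) + of_nat n * (e gchoose n))
      = a ^ Suc n * (e * (e gchoose n))"
    by (simp add: algebra_simps)
  then show "((1 + fps_const a * fps_X) * fps_deriv (binom_fps a e)) $ n
      = (fps_const (a * e) * binom_fps a e) $ n"
    unfolding fps_linear_mult_deriv_nth by (simp add: binom_fps_def algebra_simps)
qed

definition stirling_egf :: "real \<Rightarrow> real \<Rightarrow> real \<Rightarrow> nat \<Rightarrow> real fps" where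
  "stirling_egf a b c k = (binom_fps a (b / a) - 1) ^ k * binom_fps a (c / a)"

lemma stirling_egf_ODE:
  assumes "a \<noteq> 0"
  shows "(1 + fps_const a * fps_X) * fps_deriv (stirling_egf a b c k)
       = fps_const (c + real k * b) * stirling_egf a b c k
         + (if k = 0 then 0 else fps_const (real k * b) * stirling_egf a b c (k - 1))"
proof -
  define L where "L = 1 + fps_const a * fps_X"
  define U where "U = binom_fps a (b / a) - 1"
  define G where "G = binom_fps a (c / a)"
  have U': "L * fps_deriv U = fps_const b * (U + 1)"
    using binom_fps_ODE[of a "b / a"] assms by (simp add: L_def U_def)
  have G': "L * fps_deriv G = fps_const c * G"
    using binom_fps_ODE[of a "c / a"] assms by (simp add: L_def G_def)
  show ?thesis
  proof (cases k)
    case 0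
    then show ?thesis using G' by (simp add: stirling_egf_def L_def G_def)
  next
    case (Suc j)
    have "fps_deriv (U ^ Suc j) = fps_const (real (Suc j)) * fps_deriv U * U ^ j"
      by (subst fps_deriv_power) simp
    then have "L * fps_deriv (U ^ Suc j * G)
        = fps_const (real (Suc j)) * (L * fps_deriv U) * U ^ j * G + U ^ Suc j * (L * fps_deriv G)"
      by (simp only: fps_deriv_mult) (simp add: algebra_simps)
    also have "\<dots> = fps_const (c + real (Suc j) * b) * (U ^ Suc j * G)
          + fps_const (real (Suc j) * b) * (U ^ j * G)"
      unfolding U' G' fps_const_add [symmetric] fps_const_mult [symmetric]
      by (simp add: algebra_simps del: fps_const_add fps_const_mult)
    finally show ?thesis
      using Suc by (simp add: stirling_egf_def L_def U_def G_def)
  qed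
qed

lemma stirling_egf_nth:
  assumes "a \<noteq> 0"
  shows "b ^ k * fact k * gstir n k a b c = fact n * stirling_egf a b c k $ n"
proof (induction n arbitrary: k)
  case 0
  then show ?case
    by (simp add: stirling_egf_def fps_mult_nth_0 fps_power_zeroth binom_fps_def)
next
  case (Suc n)
  note IH = Suc.IH[symmetric]
  have "fact (Suc n) * stirling_egf a b c k $ Suc n
      = (c + real k * b - real n * a) * (fact n * stirling_egf a b c k $ n)
        + (if k = 0 then 0 else real k * b * (fact n * stirling_egf a b c (k - 1) $ n))"
    using arg_cong[OF stirling_egf_ODE[OF assms, of b c k], of "\<lambda>F. fact n * F $ n"]
    unfolding fps_linear_mult_deriv_nth by (simp add: algebra_simps)
  also have "\<dots> = b ^ k * fact k * gstir (Suc n) k a b c"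
  proof (cases k)
    case (Suc j)
    then show ?thesis by (simp add: IH algebra_simps)
  qed (simp add: IH algebra_simps)
  finally show ?case ..
qed

lemma fps_compose_mult_nth:
  fixes F G V :: "'a::comm_ring_1 fps"
  assumes "V $ 0 = 0"
  shows "((F oo V) * G) $ n = (\<Sum>k\<le>n. F $ k * (V ^ k * G) $ n)"
proof -
  have "((F oo V) * G) $ n = (\<Sum>i\<le>n. \<Sum>k\<le>i. F $ k * (V ^ k) $ i * G $ (n - i))"
    by (simp add: fps_mult_nth fps_compose_nth atLeast0AtMost sum_distrib_right)
  also have "\<dots> = (\<Sum>i\<le>n. \<Sum>k\<le>n. F $ k * (V ^ k) $ i * G $ (n - i))"
    using startsby_zero_power_prefix[OF assms]
    by (intro sum.cong refl sum.mono_neutral_left) auto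
  also have "\<dots> = (\<Sum>k\<le>n. F $ k * (V ^ k * G) $ n)"
    by (subst sum.swap) (simp add: fps_mult_nth atLeast0AtMost sum_distrib_left mult.assoc)
  finally show ?thesis .
qed

lemma inverse_power_eq_fps_binomial_compose:
  fixes V :: "'a::field_char_0 fps"
  assumes "V $ 0 = 0"
  shows "inverse (1 + V) ^ m = fps_binomial (- of_nat m) oo V"
proof -
  have "fps_binomial (- of_nat m) oo V = inverse ((1 + fps_X) ^ m oo V)"
    using assms by (simp add: fps_binomial_minus_of_nat fps_inverse_compose fps_power_zeroth)
  also have "(1 + fps_X) ^ m oo V = (1 + V) ^ m"
    using assms by (simp add: fps_compose_power [symmetric] fps_compose_add_distrib)
  finally show ?thesis by (simp add: fps_inverse_power)
qed

lemma geuler_eq_sum_stirling_egf: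
  assumes "a \<noteq> 0"
  shows "geuler n lam a b c
       = (\<Sum>k\<le>n. (- real lam gchoose k) * (1/2) ^ k * (fact n * stirling_egf a b c k $ n))"
proof -
  define U where "U = binom_fps a (b / a) - 1"
  define V where "V = fps_const (1/2) * U"
  have V0: "V $ 0 = 0"
    by (simp add: V_def U_def binom_fps_def)
  have "1 + V = fps_const (1/2) * (binom_fps a (b / a) + 1)"
    by (rule fps_ext) (simp add: V_def U_def algebra_simps)
  then have "fps_const 2 * inverse (binom_fps a (b / a) + 1) = inverse (1 + V)"
    by (simp add: fps_inverse_mult fps_const_inverse)
  then have "geuler n lam a b c = fact n * ((fps_binomial (- real lam) oo V) * binom_fps a (c / a)) $ n"
    by (simp add: geuler_def inverse_power_eq_fps_binomial_compose[OF V0])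
  also have "\<dots> = (\<Sum>k\<le>n. (- real lam gchoose k) * (1/2) ^ k * (fact n * stirling_egf a b c k $ n))"
    unfolding fps_compose_mult_nth[OF V0] sum_distrib_left
    by (simp add: stirling_egf_def V_def U_def power_mult_distrib mult.assoc mult.left_commute)
  finally show ?thesis .
qed

lemma Apoly_eq_sum_gstir:
  "Apoly n lam x a b c
     = (\<Sum>k\<le>n. pochhammer (real lam) k * (-1) ^ (n + k) * (b * x) ^ k * gstir n k a (-b) (-c))"
  by (simp add: Apoly_def gstirling_eq_gstir power_mult_distrib mult_ac)

theorem mainTheorem10:
  fixes \<alpha> \<beta> \<gamma> :: real and lam n :: nat
  assumes "\<alpha> \<noteq> 0"
  shows "geuler n lam \<alpha> \<beta> \<gamma> = (-1) ^ n * Apoly n lam (-1/2) \<alpha> (-\<beta>) (-\<gamma>)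
       \<and> (-1) ^ n * Apoly n lam (-1/2) \<alpha> (-\<beta>) (-\<gamma>) = Apoly n lam (-1/2) (-\<alpha>) \<beta> \<gamma>"
proof -
  define M where "M = (\<Sum>k\<le>n. (-1) ^ k * pochhammer (real lam) k * (\<beta> / 2) ^ k * gstir n k \<alpha> \<beta> \<gamma>)"
  have "geuler n lam \<alpha> \<beta> \<gamma> = M"
    unfolding geuler_eq_sum_stirling_egf[OF assms] M_def stirling_egf_nth[OF assms, symmetric]
    by (intro sum.cong refl) (simp add: gbinomial_pochhammer power_divide)
  moreover have "(-1) ^ n * Apoly n lam (-1/2) \<alpha> (-\<beta>) (-\<gamma>) = M"
    unfolding Apoly_eq_sum_gstir M_def sum_distrib_left
    by (intro sum.cong refl) (simp add: power_add mult_ac)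
  moreover have "Apoly n lam (-1/2) (-\<alpha>) \<beta> \<gamma> = M"
    unfolding Apoly_eq_sum_gstir M_def gstir_uminus
    by (intro sum.cong refl) (simp add: power_minus[of "\<beta> / 2"] mult_ac)
  ultimately show ?thesis by simp
qed

end
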